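(* Let $p$ be an odd prime and $\chi$ a primitive Dirichlet character with odd conductor $f$. For every integer $n\ge0$, in $\mathbb Q_p(\chi)$, $$(1-\chi(p)p^n)E_{n,\chi}=\lim_{N\to\infty}\sum_{\substack{a=1\\ p\nmid a}}^{fp^N}(-1)^a\chi(a)a^n .$$
   Context: We set $\chi(a)=0$ if $a$ is not prime to $f$. The generalized Euler numbers are defined by $2\sum_{a=1}^{f}\frac{(-1)^a\chi(a)e^{at}}{e^{ft}+1}=\sum_{n\ge0}E_{n,\chi}\frac{t^n}{n!}$, viewed in $\mathbb Q_p(\chi)$, the field generated over $\mathbb Q_p$ by the values of $\chi$. *)

theory Defs
  imports Complex_Main "HOL-Computational_Algebra.Computational_Algebra"
    "HOL-Number_Theory.Number_Theory"
begin

definition dirichlet_char :: "nat \<Rightarrow> (nat \<Rightarrow> complex) \<Rightarrow> bool" where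
  "dirichlet_char f chi \<longleftrightarrow> f > 0 \<and>
     (\<forall>a b. chi (a * b) = chi a * chi b) \<and>
     (\<forall>a. chi (a + f) = chi a) \<and>
     (\<forall>a. chi a = 0 \<longleftrightarrow> \<not> coprime a f)"

text \<open>Primitive with conductor f: f is the least modulus of the character, i.e. no proper
  divisor d of f is such that chi is 1 on all units mod f congruent to 1 mod d.\<close>
definition primitive_char :: "nat \<Rightarrow> (nat \<Rightarrow> complex) \<Rightarrow> bool" where
  "primitive_char f chi \<longleftrightarrow> dirichlet_char f chi \<and>
     (\<forall>d. d dvd f \<and> d < f \<longrightarrow>
        \<not> (\<forall>a. coprime a f \<and> [a = 1] (mod d) \<longrightarrow> chi a = 1))"

definition euler_chi :: "(nat \<Rightarrow> complex) \<Rightarrow> nat \<Rightarrow> nat \<Rightarrow> complex" where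
  "euler_chi chi f n = fact n *
     fps_nth (2 * (\<Sum>a=1..f. fps_const ((-1) ^ a * chi a) * fps_exp (of_nat a))
              * inverse (fps_exp (of_nat f) + 1)) n"

definition alg_int :: "complex \<Rightarrow> bool" where
  "alg_int x \<longleftrightarrow> (\<exists>q :: int poly. lead_coeff q = 1 \<and> poly (map_poly of_int q) x = 0)"

text \<open>x is integral at every prime above p (in any number field containing x).\<close>
definition p_integral :: "nat \<Rightarrow> complex \<Rightarrow> bool" where
  "p_integral p x \<longleftrightarrow> (\<exists>\<alpha> (m::int). alg_int \<alpha> \<and> m \<noteq> 0 \<and> \<not> int p dvd m \<and> x = \<alpha> / of_int m)"

text \<open>p-adic convergence (simultaneously at all primes above p) of algebraic numbers.\<close>
definition padic_tendsto :: "nat \<Rightarrow> (nat \<Rightarrow> complex) \<Rightarrow> complex \<Rightarrow> bool" where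
  "padic_tendsto p S L \<longleftrightarrow>
     (\<forall>k::nat. \<exists>N0. \<forall>N\<ge>N0. p_integral p ((S N - L) / of_nat p ^ k))"

end

theory Submission
  imports Defs "Jordan_Normal_Form.Char_Poly"
begin

text \<open>Write \<open>S_F = \<Sum>a=1..F. (-1)^a \<chi>(a) a^n\<close>. Comparing coefficients in
  \<open>(e^(Ft) + 1) G(t) = 2 \<Sum>a=1..F. (-1)^a \<chi>(a) e^(at)\<close> gives
  \<open>2 E_n + \<Sum>i=1..n. (n choose i) F^i E_(n-i) = 2 S_F\<close>, and the generating function does not
  change when f is replaced by an odd multiple F = f m. Taking m = p^N (p odd, so the factor 1/2
  is harmless) gives \<open>S_(f p^N) \<equiv> E_n mod p^N\<close>. Removing the multiples of p from the sum up to
  \<open>f p^(N+1)\<close> leaves \<open>S_(f p^(N+1)) - \<chi>(p) p^n S_(f p^N) \<equiv> (1 - \<chi>(p) p^n) E_n mod p^N\<close>.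
  All congruences take place in \<open>\<int>[\<zeta>]\<close>, \<open>\<zeta>\<close> a primitive \<open>\<phi>(f)\<close>-th root of unity, localised at p.\<close>

text \<open>The eigenvalues of integer matrices sharing a nonzero eigenvector v form a ring of
  algebraic integers; for \<open>v = (1, \<zeta>, \<dots>, \<zeta>^(M-1))\<close> it contains \<open>\<int>[\<zeta>]\<close>.\<close>
definition int_eigenvalues :: "complex vec \<Rightarrow> complex set" where
  "int_eigenvalues v = {\<alpha>. \<exists>A::int mat. A \<in> carrier_mat (dim_vec v) (dim_vec v) \<and>
     map_mat of_int A *\<^sub>v v = \<alpha> \<cdot>\<^sub>v v}"

lemma alg_int_if_int_eigenvalue:
  assumes "\<alpha> \<in> int_eigenvalues v" and "v \<noteq> 0\<^sub>v (dim_vec v)"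
  shows "alg_int \<alpha>"
proof -
  obtain A :: "int mat" where A: "A \<in> carrier_mat (dim_vec v) (dim_vec v)"
    and eig: "map_mat of_int A *\<^sub>v v = \<alpha> \<cdot>\<^sub>v v"
    using assms(1) unfolding int_eigenvalues_def by blast
  let ?B = "map_mat (of_int :: int \<Rightarrow> complex) A"
  have B: "?B \<in> carrier_mat (dim_vec v) (dim_vec v)" using A by simp
  have "eigenvalue ?B \<alpha>"
    unfolding eigenvalue_def eigenvector_def using assms(2) eig A by (auto intro!: exI[of _ v])
  hence "poly (char_poly ?B) \<alpha> = 0" using eigenvalue_root_char_poly[OF B] by simp
  moreover have "char_poly ?B = map_poly of_int (char_poly A)"
    using of_int_hom.char_poly_hom[OF A] by simp
  moreover have "lead_coeff (char_poly A) = 1" using degree_monic_char_poly[OF A] by simp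
  ultimately show ?thesis unfolding alg_int_def by auto
qed

lemma of_int_in_int_eigenvalues: "of_int c \<in> int_eigenvalues v"
proof -
  define A :: "int mat" where "A = mat (dim_vec v) (dim_vec v) (\<lambda>(i, j). if j = i then c else 0)"
  have "map_mat of_int A *\<^sub>v v = of_int c \<cdot>\<^sub>v v"
  proof (rule eq_vecI)
    fix i assume "i < dim_vec (of_int c \<cdot>\<^sub>v v)"
    hence i: "i < dim_vec v" by simp
    have "(map_mat of_int A *\<^sub>v v) $ i
        = (\<Sum>j\<in>{0..<dim_vec v}. of_int (if j = i then c else 0) * v $ j)"
      using i by (simp add: A_def scalar_prod_def)
    also have "\<dots> = (\<Sum>j\<in>{0..<dim_vec v}. if j = i then of_int c * v $ i else 0)"
      by (intro sum.cong) auto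
    also have "\<dots> = of_int c * v $ i" using i by (simp add: sum.delta)
    finally show "(map_mat of_int A *\<^sub>v v) $ i = (of_int c \<cdot>\<^sub>v v) $ i" using i by simp
  qed (simp add: A_def)
  thus ?thesis unfolding int_eigenvalues_def by (intro CollectI exI[of _ A]) (auto simp: A_def)
qed

lemma of_nat_in_int_eigenvalues: "of_nat c \<in> int_eigenvalues v"
  using of_int_in_int_eigenvalues[of "int c"] by simp

lemma int_eigenvalues_add:
  assumes "\<alpha> \<in> int_eigenvalues v" "\<beta> \<in> int_eigenvalues v"
  shows "\<alpha> + \<beta> \<in> int_eigenvalues v"
proof -
  obtain A B :: "int mat" where A: "A \<in> carrier_mat (dim_vec v) (dim_vec v)"
      "map_mat of_int A *\<^sub>v v = \<alpha> \<cdot>\<^sub>v v"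
    and B: "B \<in> carrier_mat (dim_vec v) (dim_vec v)" "map_mat of_int B *\<^sub>v v = \<beta> \<cdot>\<^sub>v v"
    using assms unfolding int_eigenvalues_def by blast
  have "map_mat of_int (A + B) = map_mat (of_int :: int \<Rightarrow> complex) A + map_mat of_int B"
    using A B by (intro eq_matI) auto
  hence "map_mat of_int (A + B) *\<^sub>v v = (\<alpha> + \<beta>) \<cdot>\<^sub>v v"
    using A B by (simp add: add_mult_distrib_mat_vec[of _ "dim_vec v" "dim_vec v"]
        add_smult_distrib_vec)
  thus ?thesis using A B unfolding int_eigenvalues_def by (intro CollectI exI[of _ "A + B"]) auto
qed

lemma int_eigenvalues_mult:
  assumes "\<alpha> \<in> int_eigenvalues v" "\<beta> \<in> int_eigenvalues v"
  shows "\<alpha> * \<beta> \<in> int_eigenvalues v"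
proof -
  obtain A B :: "int mat" where A: "A \<in> carrier_mat (dim_vec v) (dim_vec v)"
      "map_mat of_int A *\<^sub>v v = \<alpha> \<cdot>\<^sub>v v"
    and B: "B \<in> carrier_mat (dim_vec v) (dim_vec v)" "map_mat of_int B *\<^sub>v v = \<beta> \<cdot>\<^sub>v v"
    using assms unfolding int_eigenvalues_def by blast
  have "map_mat of_int (A * B) *\<^sub>v v = map_mat of_int A *\<^sub>v (map_mat of_int B *\<^sub>v v)"
    using A B by (simp add: of_int_hom.mat_hom_mult assoc_mult_mat_vec[of _ "dim_vec v" "dim_vec v"])
  also have "\<dots> = (\<alpha> * \<beta>) \<cdot>\<^sub>v v"
    using A B by (simp add: mult_mat_vec[of _ "dim_vec v" "dim_vec v"] smult_smult_assoc mult.commute)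
  finally show ?thesis
    using A B unfolding int_eigenvalues_def by (intro CollectI exI[of _ "A * B"]) auto
qed

lemma int_eigenvalues_sum:
  "(\<And>i. i \<in> I \<Longrightarrow> g i \<in> int_eigenvalues v) \<Longrightarrow> sum g I \<in> int_eigenvalues v"
  using of_int_in_int_eigenvalues[of 0]
  by (induction I rule: infinite_finite_induct) (auto intro: int_eigenvalues_add)

lemma int_eigenvalues_power: "\<alpha> \<in> int_eigenvalues v \<Longrightarrow> \<alpha> ^ k \<in> int_eigenvalues v"
  using of_int_in_int_eigenvalues[of 1] by (induction k) (auto intro: int_eigenvalues_mult)

definition unit_root :: "nat \<Rightarrow> complex" where
  "unit_root M = cis (2 * pi / real M)"

definition unit_root_powers :: "nat \<Rightarrow> complex vec" where
  "unit_root_powers M = vec M (\<lambda>i. unit_root M ^ i)"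

lemma power_mod_if_power_eq_1:
  fixes z :: "'a :: monoid_mult"
  assumes "z ^ M = 1"
  shows "z ^ (k mod M) = z ^ k"
proof -
  have "z ^ k = z ^ (k mod M) * (z ^ M) ^ (k div M)"
    by (simp only: power_add[symmetric] power_mult[symmetric] mod_mult_div_eq)
  thus ?thesis using assms by simp
qed

lemma unit_root_power_eq_1: "M > 0 \<Longrightarrow> unit_root M ^ M = 1"
  by (simp add: unit_root_def DeMoivre)

text \<open>\<open>\<zeta>\<close> is the eigenvalue of the cyclic shift matrix on the vector of its powers.\<close>
lemma unit_root_in_int_eigenvalues:
  assumes "M > 0"
  shows "unit_root M \<in> int_eigenvalues (unit_root_powers M)"
proof -
  let ?\<zeta> = "unit_root M"
  define A :: "int mat" where "A = mat M M (\<lambda>(i, j). if j = Suc i mod M then 1 else 0)"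
  have "map_mat of_int A *\<^sub>v unit_root_powers M = ?\<zeta> \<cdot>\<^sub>v unit_root_powers M"
  proof (rule eq_vecI)
    fix i assume "i < dim_vec (?\<zeta> \<cdot>\<^sub>v unit_root_powers M)"
    hence i: "i < M" by (simp add: unit_root_powers_def)
    have "(map_mat of_int A *\<^sub>v unit_root_powers M) $ i =
        (\<Sum>j\<in>{0..<M}. of_int (if j = Suc i mod M then 1 else 0) * ?\<zeta> ^ j)"
      using i by (simp add: A_def unit_root_powers_def scalar_prod_def)
    also have "\<dots> = (\<Sum>j\<in>{0..<M}. if j = Suc i mod M then ?\<zeta> ^ j else 0)"
      by (intro sum.cong) auto
    also have "\<dots> = ?\<zeta> ^ (Suc i mod M)" using assms by (simp add: sum.delta)
    also have "\<dots> = ?\<zeta> ^ Suc i"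
      by (rule power_mod_if_power_eq_1[OF unit_root_power_eq_1[OF assms]])
    finally show "(map_mat of_int A *\<^sub>v unit_root_powers M) $ i = (?\<zeta> \<cdot>\<^sub>v unit_root_powers M) $ i"
      using i by (simp add: unit_root_powers_def)
  qed (simp add: A_def unit_root_powers_def)
  thus ?thesis unfolding int_eigenvalues_def
    by (intro CollectI exI[of _ A]) (auto simp: A_def unit_root_powers_def)
qed

lemma root_of_unity_in_int_eigenvalues:
  assumes "M > 0" and "z ^ M = 1"
  shows "z \<in> int_eigenvalues (unit_root_powers M)"
proof -
  obtain k where "k < M" "z = cis (2 * pi * real k / real M)"
    using bij_betw_roots_unity[OF assms(1)] assms(2) unfolding bij_betw_def by auto
  hence "z = unit_root M ^ k" by (simp add: unit_root_def DeMoivre field_simps)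
  thus ?thesis using int_eigenvalues_power[OF unit_root_in_int_eigenvalues[OF assms(1)]] by simp
qed

lemma unit_root_powers_nonzero:
  "M > 0 \<Longrightarrow> unit_root_powers M \<noteq> 0\<^sub>v (dim_vec (unit_root_powers M))"
  by (auto simp: unit_root_powers_def dest!: arg_cong[where f = "\<lambda>w :: complex vec. w $ 0"])

definition int_eigenvalues_at :: "nat \<Rightarrow> complex vec \<Rightarrow> complex set" where
  "int_eigenvalues_at p v = {\<alpha> / of_int m | \<alpha> m. \<alpha> \<in> int_eigenvalues v \<and> \<not> int p dvd m}"

context
  fixes p :: nat and v :: "complex vec"
  assumes p: "prime p"
begin

lemma int_eigenvalues_at_I:
  assumes "\<alpha> \<in> int_eigenvalues v"
  shows "\<alpha> \<in> int_eigenvalues_at p v"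
  using assms p unfolding int_eigenvalues_at_def
  by (intro CollectI exI[of _ \<alpha>] exI[of _ 1]) (auto simp: prime_gt_1_nat)

lemma of_int_in_int_eigenvalues_at: "of_int c \<in> int_eigenvalues_at p v"
  by (rule int_eigenvalues_at_I[OF of_int_in_int_eigenvalues])

lemma of_nat_in_int_eigenvalues_at: "of_nat c \<in> int_eigenvalues_at p v"
  by (rule int_eigenvalues_at_I[OF of_nat_in_int_eigenvalues])

lemma int_eigenvalues_at_E:
  assumes "x \<in> int_eigenvalues_at p v"
  obtains \<alpha> m where "\<alpha> \<in> int_eigenvalues v" "m \<noteq> 0" "\<not> int p dvd m" "x = \<alpha> / of_int m"
proof -
  obtain \<alpha> m where "\<alpha> \<in> int_eigenvalues v" "\<not> int p dvd m" "x = \<alpha> / of_int m"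
    using assms unfolding int_eigenvalues_at_def by blast
  moreover from this have "m \<noteq> 0" by auto
  ultimately show thesis using that by blast
qed

lemma int_eigenvalues_at_add:
  assumes "x \<in> int_eigenvalues_at p v" "y \<in> int_eigenvalues_at p v"
  shows "x + y \<in> int_eigenvalues_at p v"
proof -
  obtain \<alpha> m \<beta> n where "\<alpha> \<in> int_eigenvalues v" "m \<noteq> 0" "\<not> int p dvd m" "x = \<alpha> / of_int m"
    "\<beta> \<in> int_eigenvalues v" "n \<noteq> 0" "\<not> int p dvd n" "y = \<beta> / of_int n"
    using assms by (elim int_eigenvalues_at_E)
  moreover from this have "\<not> int p dvd m * n" using p by (simp add: prime_dvd_mult_iff)
  moreover have "x + y = (\<alpha> * of_int n + \<beta> * of_int m) / of_int (m * n)"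
    using calculation by (simp add: field_simps)
  ultimately show ?thesis unfolding int_eigenvalues_at_def
    by (intro CollectI exI[of _ "\<alpha> * of_int n + \<beta> * of_int m"] exI[of _ "m * n"])
       (auto intro!: int_eigenvalues_add int_eigenvalues_mult of_int_in_int_eigenvalues)
qed

lemma int_eigenvalues_at_mult:
  assumes "x \<in> int_eigenvalues_at p v" "y \<in> int_eigenvalues_at p v"
  shows "x * y \<in> int_eigenvalues_at p v"
proof -
  obtain \<alpha> m \<beta> n where "\<alpha> \<in> int_eigenvalues v" "m \<noteq> 0" "\<not> int p dvd m" "x = \<alpha> / of_int m"
    "\<beta> \<in> int_eigenvalues v" "n \<noteq> 0" "\<not> int p dvd n" "y = \<beta> / of_int n"
    using assms by (elim int_eigenvalues_at_E)
  moreover from this have "\<not> int p dvd m * n" using p by (simp add: prime_dvd_mult_iff)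
  ultimately show ?thesis unfolding int_eigenvalues_at_def
    by (intro CollectI exI[of _ "\<alpha> * \<beta>"] exI[of _ "m * n"]) (auto intro!: int_eigenvalues_mult)
qed

lemma int_eigenvalues_at_diff:
  assumes "x \<in> int_eigenvalues_at p v" "y \<in> int_eigenvalues_at p v"
  shows "x - y \<in> int_eigenvalues_at p v"
  using int_eigenvalues_at_add[OF assms(1)
      int_eigenvalues_at_mult[OF of_int_in_int_eigenvalues_at[of "-1"] assms(2)]]
  by simp

lemma int_eigenvalues_at_sum:
  "(\<And>i. i \<in> I \<Longrightarrow> g i \<in> int_eigenvalues_at p v) \<Longrightarrow> sum g I \<in> int_eigenvalues_at p v"
  using of_int_in_int_eigenvalues_at[of 0]
  by (induction I rule: infinite_finite_induct) (auto intro: int_eigenvalues_at_add)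

lemma int_eigenvalues_at_divide:
  assumes "x \<in> int_eigenvalues_at p v" and "\<not> int p dvd m"
  shows "x / of_int m \<in> int_eigenvalues_at p v"
proof -
  obtain \<alpha> n where "\<alpha> \<in> int_eigenvalues v" "\<not> int p dvd n" "x = \<alpha> / of_int n"
    using assms(1) by (elim int_eigenvalues_at_E)
  moreover from this have "\<not> int p dvd n * m" using p assms(2) by (simp add: prime_dvd_mult_iff)
  ultimately show ?thesis unfolding int_eigenvalues_at_def
    by (intro CollectI exI[of _ \<alpha>] exI[of _ "n * m"]) auto
qed

lemma half_in_int_eigenvalues_at:
  assumes "odd p" and "x \<in> int_eigenvalues_at p v"
  shows "x / 2 \<in> int_eigenvalues_at p v"
proof -
  have "\<not> p dvd 2"
    using p assms(1) prime_ge_2_nat[of p] dvd_imp_le[of p 2] by (cases "p = 2") auto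
  hence "\<not> int p dvd int 2" by presburger
  thus ?thesis using int_eigenvalues_at_divide[OF assms(2), of 2] by simp
qed

lemma p_integral_if_in_int_eigenvalues_at:
  assumes "x \<in> int_eigenvalues_at p v" and "v \<noteq> 0\<^sub>v (dim_vec v)"
  shows "p_integral p x"
  using assms(1) alg_int_if_int_eigenvalue[OF _ assms(2)]
  unfolding p_integral_def by (elim int_eigenvalues_at_E) blast

end

context
  fixes f :: nat and chi :: "nat \<Rightarrow> complex"
  assumes chi: "dirichlet_char f chi"
begin

lemma dirichlet_char_mult: "chi (a * b) = chi a * chi b"
  using chi unfolding dirichlet_char_def by blast

lemma dirichlet_char_periodic: "chi (a + f * i) = chi a"
proof (induction i)
  case (Suc i)
  have "chi (a + f * Suc i) = chi ((a + f * i) + f)" by (simp add: algebra_simps)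
  also have "\<dots> = chi (a + f * i)" using chi unfolding dirichlet_char_def by blast
  finally show ?case using Suc by simp
qed simp

lemma dirichlet_char_cong: "[a = b] (mod f) \<Longrightarrow> chi a = chi b"
  unfolding cong_def by (metis dirichlet_char_periodic mod_mult_div_eq add.commute)

lemma dirichlet_char_one: "chi 1 = 1"
proof -
  have "chi 1 = chi 1 * chi 1" using dirichlet_char_mult[of 1 1] by simp
  moreover have "chi 1 \<noteq> 0" using chi unfolding dirichlet_char_def by simp
  ultimately show ?thesis by (metis mult_cancel_left1)
qed

lemma dirichlet_char_power: "chi (a ^ k) = chi a ^ k"
  using dirichlet_char_one by (induction k) (simp_all add: dirichlet_char_mult)

lemma dirichlet_char_in_int_eigenvalues: "chi a \<in> int_eigenvalues (unit_root_powers (totient f))"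
proof (cases "coprime a f")
  case False
  hence "chi a = 0" using chi unfolding dirichlet_char_def by simp
  thus ?thesis using of_int_in_int_eigenvalues[of 0] by simp
next
  case True
  have "totient f > 0" using chi unfolding dirichlet_char_def by simp
  moreover have "chi a ^ totient f = 1"
    using dirichlet_char_cong[OF euler_theorem[OF True]] dirichlet_char_one
    by (simp add: dirichlet_char_power)
  ultimately show ?thesis by (rule root_of_unity_in_int_eigenvalues)
qed

end

definition char_exp_sum :: "(nat \<Rightarrow> complex) \<Rightarrow> nat \<Rightarrow> complex fps" where
  "char_exp_sum chi F = (\<Sum>a=1..F. fps_const ((-1) ^ a * chi a) * fps_exp (of_nat a))"

definition char_power_sum :: "(nat \<Rightarrow> complex) \<Rightarrow> nat \<Rightarrow> nat \<Rightarrow> complex" where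
  "char_power_sum chi F n = (\<Sum>a=1..F. (-1) ^ a * chi a * of_nat a ^ n)"

lemma euler_chi_char_exp_sum:
  "euler_chi chi F n = fact n * (2 * char_exp_sum chi F * inverse (fps_exp (of_nat F) + 1)) $ n"
  unfolding euler_chi_def char_exp_sum_def by simp

lemma euler_chi_recurrence:
  "2 * euler_chi chi F n + (\<Sum>i=1..n. of_nat (n choose i) * of_nat F ^ i * euler_chi chi F (n - i))
     = 2 * char_power_sum chi F n"
proof -
  define X where "X = fps_exp (of_nat F :: complex)"
  define G where "G = 2 * char_exp_sum chi F * inverse (X + 1)"
  have E: "euler_chi chi F k = fact k * G $ k" for k
    unfolding euler_chi_char_exp_sum G_def X_def ..
  have "(X + 1) * G = 2 * char_exp_sum chi F"
    unfolding G_def using inverse_mult_eq_1'[of "X + 1"] by (simp add: X_def ac_simps)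
  hence "(X * G + G) $ n = (2 * char_exp_sum chi F) $ n"
    by (simp add: distrib_right)
  hence "(X * G) $ n + G $ n = (2 * char_exp_sum chi F) $ n"
    by (simp only: fps_add_nth)
  hence "fact n * (X * G) $ n + euler_chi chi F n = fact n * (2 * char_exp_sum chi F) $ n"
    unfolding E by (simp flip: distrib_left)
  moreover have "fact n * (X * G) $ n =
      (\<Sum>i=0..n. of_nat (n choose i) * of_nat F ^ i * euler_chi chi F (n - i))"
    unfolding fps_mult_nth sum_distrib_left E
    by (intro sum.cong) (simp_all add: X_def binomial_fact field_simps)
  moreover have "fact n * (2 * char_exp_sum chi F) $ n = 2 * char_power_sum chi F n"
    by (simp add: numeral_fps_const char_exp_sum_def char_power_sum_def fps_sum_nth sum_distrib_left)
  ultimately show ?thesis by (simp add: E sum.atLeast_Suc_atMost)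
qed

lemma char_exp_sum_mult:
  assumes "dirichlet_char f chi" and "odd f"
  shows "char_exp_sum chi (f * m) = char_exp_sum chi f * (\<Sum>i<m. (- fps_exp (of_nat f)) ^ i)"
proof (induction m)
  case (Suc m)
  let ?g = "\<lambda>a. fps_const ((-1) ^ a * chi a) * fps_exp (of_nat a :: complex)"
  have "char_exp_sum chi (f * Suc m) = char_exp_sum chi (f * m) + (\<Sum>a=f*m+1..f*m+f. ?g a)"
    unfolding char_exp_sum_def mult_Suc_right add.commute[of f] by (rule sum.ub_add_nat) simp
  also have "(\<Sum>a=f*m+1..f*m+f. ?g a) = (\<Sum>b=1..f. ?g (b + f * m))"
    using sum.shift_bounds_cl_nat_ivl[of ?g 1 "f * m" f] by (simp add: add.commute)
  also have "\<dots> = (\<Sum>b=1..f. ?g b * (- fps_exp (of_nat f)) ^ m)"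
  proof (rule sum.cong[OF refl])
    fix b
    have sign: "(-1 :: complex) ^ (b + f * m) = (-1) ^ b * (-1) ^ m"
      by (simp only: power_add power_mult neg_one_odd_power[OF assms(2)])
    have "fps_exp (of_nat (b + f * m) :: complex) = fps_exp (of_nat b + of_nat m * of_nat f)"
      by (simp add: mult.commute)
    hence exp: "fps_exp (of_nat (b + f * m) :: complex)
        = fps_exp (of_nat b) * fps_exp (of_nat f) ^ m"
      by (simp only: fps_exp_add_mult fps_exp_power_mult)
    have "fps_const (-1 :: complex) = -1" by simp
    hence neg: "(- fps_exp (of_nat f :: complex)) ^ m
        = fps_const ((-1) ^ m) * fps_exp (of_nat f) ^ m"
      by (simp only: power_minus[of "fps_exp (of_nat f)"] fps_const_power[symmetric])
    have "fps_const ((-1) ^ b * (-1) ^ m * chi b)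
        = fps_const ((-1) ^ b * chi b) * fps_const ((-1 :: complex) ^ m)"
      by (simp add: mult_ac)
    thus "?g (b + f * m) = ?g b * (- fps_exp (of_nat f)) ^ m"
      unfolding dirichlet_char_periodic[OF assms(1)] sign exp neg by (simp only: ac_simps)
  qed
  also have "\<dots> = char_exp_sum chi f * (- fps_exp (of_nat f)) ^ m"
    unfolding char_exp_sum_def by (simp add: sum_distrib_right)
  finally show ?case using Suc by (simp add: distrib_left)
qed (simp add: char_exp_sum_def)

text \<open>Numerator and denominator of the generating function both acquire the factor
  \<open>\<Sum>i<m. (- e^(f t))^i\<close>.\<close>
lemma euler_chi_mult_odd:
  assumes "dirichlet_char f chi" and "odd f" and "odd m"
  shows "euler_chi chi (f * m) n = euler_chi chi f n"
proof -
  define X where "X = fps_exp (of_nat f :: complex)"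
  define Q where "Q = (\<Sum>i<m. (- X) ^ i)"
  have "(X + 1) * Q = 1 - (- X) ^ m"
    unfolding Q_def by (induction m) (auto simp: algebra_simps)
  hence D: "fps_exp (of_nat (f * m)) + 1 = (X + 1) * Q"
    using assms(3) by (simp add: X_def fps_exp_power_mult mult.commute)
  have "(X + 1) $ 0 * Q $ 0 = 2"
    using arg_cong[OF D, of "\<lambda>A :: complex fps. A $ 0"] by (simp add: X_def)
  hence "Q * inverse Q = 1" by (intro inverse_mult_eq_1') auto
  hence "2 * (char_exp_sum chi f * Q) * (inverse (X + 1) * inverse Q)
      = 2 * char_exp_sum chi f * inverse (X + 1)"
    by (metis (no_types, lifting) mult.assoc mult.commute mult_1_right)
  hence "2 * char_exp_sum chi (f * m) * inverse (fps_exp (of_nat (f * m)) + 1)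
      = 2 * char_exp_sum chi f * inverse (X + 1)"
    unfolding D char_exp_sum_mult[OF assms(1,2)] fps_inverse_mult by (simp only: X_def Q_def)
  thus ?thesis unfolding euler_chi_char_exp_sum X_def by (simp only:)
qed

lemma sum_prime_to_eq_char_power_sum:
  assumes "dirichlet_char f chi" and "odd p"
  shows "(\<Sum>a\<in>{a\<in>{1..p * F}. \<not> p dvd a}. (-1) ^ a * chi a * of_nat a ^ n)
     = char_power_sum chi (p * F) n - chi p * of_nat p ^ n * char_power_sum chi F n"
proof -
  let ?g = "\<lambda>a. (-1) ^ a * chi a * (of_nat a :: complex) ^ n"
  have p0: "p > 0" using assms(2) by (intro odd_pos)
  have "char_power_sum chi (p * F) n
      = sum ?g {a\<in>{1..p * F}. p dvd a} + sum ?g {a\<in>{1..p * F}. \<not> p dvd a}"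
    unfolding char_power_sum_def by (subst sum.union_disjoint[symmetric]) (auto intro: sum.cong)
  moreover have "{a\<in>{1..p * F}. p dvd a} = (\<lambda>b. p * b) ` {1..F}"
    using p0 by (auto elim!: dvdE simp: image_iff)
  moreover have "sum ?g ((\<lambda>b. p * b) ` {1..F}) = chi p * of_nat p ^ n * char_power_sum chi F n"
  proof -
    have "(-1 :: complex) ^ (p * b) = (-1) ^ b" for b
      by (simp add: power_mult neg_one_odd_power[OF assms(2)])
    thus ?thesis using p0
      by (simp add: sum.reindex inj_on_def char_power_sum_def sum_distrib_left
          power_mult_distrib dirichlet_char_mult[OF assms(1)] mult_ac)
  qed
  ultimately show ?thesis by simp
qed

lemma char_power_sum_in_int_eigenvalues:
  assumes "\<And>a. chi a \<in> int_eigenvalues v"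
  shows "char_power_sum chi F n \<in> int_eigenvalues v"
  unfolding char_power_sum_def
  by (intro int_eigenvalues_sum int_eigenvalues_mult int_eigenvalues_power assms
      of_nat_in_int_eigenvalues of_int_in_int_eigenvalues[of "-1", simplified])

context
  fixes p :: nat and v :: "complex vec" and chi :: "nat \<Rightarrow> complex"
  assumes p: "prime p" "odd p"
    and chi: "\<And>a. chi a \<in> int_eigenvalues v"
begin

lemma euler_chi_in_int_eigenvalues_at: "euler_chi chi F k \<in> int_eigenvalues_at p v"
proof (induction k rule: less_induct)
  case (less k)
  have "euler_chi chi F k = char_power_sum chi F k
      - (\<Sum>i=1..k. of_nat (k choose i) * of_nat F ^ i * euler_chi chi F (k - i)) / 2"
    using euler_chi_recurrence[of chi F k] by (simp add: field_simps)
  also have "\<dots> \<in> int_eigenvalues_at p v"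
    using p(1) int_eigenvalues_at_I[OF p(1) char_power_sum_in_int_eigenvalues[of chi, OF chi]]
    by (intro int_eigenvalues_at_diff half_in_int_eigenvalues_at[OF p] int_eigenvalues_at_sum
        int_eigenvalues_at_mult less)
       (auto simp flip: of_nat_power intro: of_nat_in_int_eigenvalues_at)
  finally show ?case .
qed

text \<open>By the recurrence, \<open>S_F - E_n\<close> is a combination of positive powers of \<open>F = f m\<close>,
  while \<open>E_n\<close> does not depend on the odd factor \<open>m\<close>.\<close>
lemma char_power_sum_minus_euler_chi_divisible:
  assumes "dirichlet_char f chi" "odd f" "odd m" "p ^ k dvd m"
  shows "(char_power_sum chi (f * m) n - euler_chi chi f n) / of_nat p ^ k
    \<in> int_eigenvalues_at p v"
proof -
  define F where "F = f * m"
  have E: "euler_chi chi F j = euler_chi chi f j" for j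
    unfolding F_def by (rule euler_chi_mult_odd[OF assms(1-3)])
  have F_pow: "of_nat F ^ i / of_nat p ^ k = (of_nat (F ^ i div p ^ k) :: complex)"
    if "i \<ge> 1" for i
  proof -
    have "m dvd F ^ i" using that unfolding F_def by (cases i) auto
    hence "p ^ k dvd F ^ i" using assms(4) by (rule dvd_trans[rotated])
    then obtain q where q: "F ^ i = p ^ k * q" by (elim dvdE)
    hence "of_nat F ^ i = (of_nat p ^ k * of_nat q :: complex)" by (metis of_nat_mult of_nat_power)
    thus ?thesis using q prime_gt_0_nat[OF p(1)] by simp
  qed
  have "char_power_sum chi F n - euler_chi chi f n
      = (\<Sum>i=1..n. of_nat (n choose i) * of_nat F ^ i * euler_chi chi f (n - i)) / 2"
    using euler_chi_recurrence[of chi F n] unfolding E by (simp add: field_simps)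
  hence "(char_power_sum chi F n - euler_chi chi f n) / of_nat p ^ k
      = (\<Sum>i=1..n. of_nat (n choose i) * (of_nat F ^ i / of_nat p ^ k)
          * euler_chi chi f (n - i)) / 2"
    by (simp add: sum_divide_distrib mult.commute)
  also have "\<dots> = (\<Sum>i=1..n. of_nat (n choose i) * of_nat (F ^ i div p ^ k)
      * euler_chi chi f (n - i)) / 2"
    by (intro arg_cong[where f = "\<lambda>x. x / 2"] sum.cong) (auto simp: F_pow)
  also have "\<dots> \<in> int_eigenvalues_at p v"
    using p(1) by (intro half_in_int_eigenvalues_at[OF p] int_eigenvalues_at_sum
        int_eigenvalues_at_mult of_nat_in_int_eigenvalues_at euler_chi_in_int_eigenvalues_at)
  finally show ?thesis unfolding F_def .
qed

lemma sum_prime_to_minus_euler_chi_divisible: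
  assumes "dirichlet_char f chi" "odd f" "k \<le> N"
  shows "((\<Sum>a\<in>{a\<in>{1..f * p ^ Suc N}. \<not> p dvd a}. (-1) ^ a * chi a * of_nat a ^ n)
      - (1 - chi p * of_nat p ^ n) * euler_chi chi f n) / of_nat p ^ k \<in> int_eigenvalues_at p v"
proof -
  let ?D = "\<lambda>M. (char_power_sum chi (f * p ^ M) n - euler_chi chi f n) / of_nat p ^ k"
  have D: "?D M \<in> int_eigenvalues_at p v" if "k \<le> M" for M
    using assms(1,2) p that
    by (intro char_power_sum_minus_euler_chi_divisible) (auto simp: le_imp_power_dvd)
  have "(\<Sum>a\<in>{a\<in>{1..f * p ^ Suc N}. \<not> p dvd a}. (-1) ^ a * chi a * of_nat a ^ n)
      = char_power_sum chi (f * p ^ Suc N) n - chi p * of_nat p ^ n * char_power_sum chi (f * p ^ N) n"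
    using sum_prime_to_eq_char_power_sum[OF assms(1) p(2), where F = "f * p ^ N" and n = n]
    by (simp add: ac_simps)
  moreover have "(char_power_sum chi (f * p ^ Suc N) n
        - chi p * of_nat p ^ n * char_power_sum chi (f * p ^ N) n
        - (1 - chi p * of_nat p ^ n) * euler_chi chi f n) / of_nat p ^ k
      = ?D (Suc N) - chi p * of_nat p ^ n * ?D N"
    using prime_gt_0_nat[OF p(1)] by (simp add: field_simps)
  moreover have "?D (Suc N) - chi p * of_nat p ^ n * ?D N \<in> int_eigenvalues_at p v"
    using p(1) assms(3)
    by (intro int_eigenvalues_at_diff int_eigenvalues_at_mult D int_eigenvalues_at_I chi)
       (auto simp flip: of_nat_power intro: of_nat_in_int_eigenvalues)
  ultimately show ?thesis by simp
qed

end

theorem corollary2p2: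
  fixes p f n :: nat and chi :: "nat \<Rightarrow> complex"
  assumes "prime p" and "odd p"
    and "primitive_char f chi" and "odd f"
  shows "padic_tendsto p
           (\<lambda>N. \<Sum>a\<in>{a\<in>{1..f * p ^ N}. \<not> p dvd a}. (-1) ^ a * chi a * of_nat a ^ n)
           ((1 - chi p * of_nat p ^ n) * euler_chi chi f n)"
proof -
  have chi: "dirichlet_char f chi" using assms(3) unfolding primitive_char_def by simp
  define v where "v = unit_root_powers (totient f)"
  have v: "v \<noteq> 0\<^sub>v (dim_vec v)"
    unfolding v_def using chi by (intro unit_root_powers_nonzero) (simp add: dirichlet_char_def)
  have chi_v: "chi a \<in> int_eigenvalues v" for a
    unfolding v_def by (rule dirichlet_char_in_int_eigenvalues[OF chi])
  have "p_integral p (((\<Sum>a\<in>{a\<in>{1..f * p ^ N}. \<not> p dvd a}. (-1) ^ a * chi a * of_nat a ^ n)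
      - (1 - chi p * of_nat p ^ n) * euler_chi chi f n) / of_nat p ^ k)" if "Suc k \<le> N" for k N
    using that sum_prime_to_minus_euler_chi_divisible[OF assms(1,2) chi_v chi assms(4)]
      p_integral_if_in_int_eigenvalues_at[OF assms(1) _ v]
    by (cases N) auto
  thus ?thesis unfolding padic_tendsto_def by blast
qed

end
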